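(* Let $L>1$ and let $\mathbf{r}:[0,L]\to\mathbb{R}^2$, $\mathbf{r}(s)=[x(s),y(s)]^T$, be a smooth curve parametrized by arclength $s$ (so $|\dot{\mathbf r}(s)|=1$, where $\dot{()}=d/ds$), with $\mathbf{r}(0)=[0,0]^T$ and $\mathbf{r}(L)=[1,0]^T$. If there is no $s^\star\in[0,L]$ with $\dot{\mathbf{r}}(s^\star)=[1,0]^T$, then $\mathbf{r}$ is self-intersecting. *)

theory Defs
  imports "HOL-Analysis.Analysis"
begin

definition smooth_curve_on :: "real \<Rightarrow> real \<Rightarrow> (real \<Rightarrow> 'a::real_normed_vector) \<Rightarrow> bool" where
  "smooth_curve_on a b r \<longleftrightarrow>
     (\<exists>D :: nat \<Rightarrow> real \<Rightarrow> 'a. D 0 = r \<and>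
        (\<forall>n. \<forall>s\<in>{a..b}. (D n has_vector_derivative D (Suc n) s) (at s within {a..b})))"

end

theory Submission
  imports Defs
begin

text \<open>
  Identify the plane with \<complex> and suppose the curve is injective. Let u be the last time it
  meets the half-axis {z. Im z = 0, Re z \<le> 0} and v the first later time it meets the real
  axis again; since the tangent at u is not a positive real, the curve leaves the axis
  immediately after u. So on [u, v] we have an injective arc in a closed half plane joining two
  real points, the later one to the right.

  For such an arc p on [a, b] consider Hopf's secant map F(s, t) = (p t - p s) / (t - s) on the
  triangle a \<le> s \<le> t \<le> b, extended by p' on the diagonal. It is continuous and, by injectivity,
  nonvanishing, so it has a continuous argument \<theta> with \<theta>(a, b) = 0. On the edge s = a the
  values of F lie in the closed upper half plane and on the edge t = b in the lower one, hence
  \<theta>(a, a) \<ge> 0 \<ge> \<theta>(b, b), and \<theta> vanishes somewhere on the diagonal. There the tangent p' is a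
  positive real, i.e. the unit tangent equals (1, 0).
\<close>

lemma continuous_sin_nonneg_imp_range_0_pi:
  fixes k :: "'a::topological_space \<Rightarrow> real"
  assumes "connected S" "continuous_on S k" "x0 \<in> S" "k x0 = 0"
    and sin_nonneg: "\<And>x. x \<in> S \<Longrightarrow> 0 \<le> sin (k x)"
    and "x \<in> S"
  shows "0 \<le> k x \<and> k x \<le> pi"
proof (rule ccontr)
  have conn: "connected (k ` S)"
    by (rule connected_continuous_image[OF assms(2,1)])
  have attained: "w \<in> k ` S" if "min 0 (k x) \<le> w" "w \<le> max 0 (k x)" for w
    using connectedD_interval[OF conn, of "min 0 (k x)" "max 0 (k x)" w] that assms(3,4,6)
    by (auto simp: min_def max_def)
  have not_attained: "w \<notin> k ` S" if "sin w < 0" for w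
    using sin_nonneg that by force
  assume "\<not> (0 \<le> k x \<and> k x \<le> pi)"
  then consider "k x < 0" | "k x > pi" by linarith
  then show False
  proof cases
    case 1
    then have "sin (max (k x) (- pi/4)) < 0"
      using pi_gt_zero by (intro sin_less_zero) (simp_all add: less_max_iff_disj)
    moreover have "max (k x) (- pi/4) \<in> k ` S"
      by (intro attained) (use 1 pi_gt_zero in auto)
    ultimately show False
      using not_attained by blast
  next
    case 2
    then have "sin (min (k x) (5/4 * pi)) < 0"
      using pi_gt_zero by (intro sin_lt_zero) (simp_all add: min_less_iff_disj)
    moreover have "min (k x) (5/4 * pi) \<in> k ` S"
      using 2 pi_gt_zero by (intro attained) (linarith, simp add: max_def)
    ultimately show False
      using not_attained by blast
  qed
qed

definition ordered_pairs :: "real \<Rightarrow> real \<Rightarrow> (real \<times> real) set" where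
  "ordered_pairs a b = {(s, t). a \<le> s \<and> s \<le> t \<and> t \<le> b}"

definition difference_quotient ::
    "(real \<Rightarrow> 'a::real_normed_vector) \<Rightarrow> (real \<Rightarrow> 'a) \<Rightarrow> real \<times> real \<Rightarrow> 'a" where
  "difference_quotient p p' =
     (\<lambda>(s, t). if s = t then p' s else inverse (t - s) *\<^sub>R (p t - p s))"

lemma convex_ordered_pairs: "convex (ordered_pairs a b)"
proof -
  have "ordered_pairs a b = fst -` {a..} \<inter> (\<lambda>z. snd z - fst z) -` {0..} \<inter> snd -` {..b}"
    by (auto simp: ordered_pairs_def)
  then show ?thesis
    by (simp only:) (intro convex_Int convex_linear_vimage convex_real_interval;
        auto simp: linear_iff algebra_simps)
qed

lemma difference_quotient_approx_derivative:
  fixes p :: "real \<Rightarrow> 'a::real_normed_vector"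
  assumes "s < t"
    and "\<And>\<xi>. \<xi> \<in> {s..t} \<Longrightarrow> (p has_vector_derivative p' \<xi>) (at \<xi> within {s..t})"
    and "\<And>\<xi>. \<xi> \<in> {s..t} \<Longrightarrow> norm (p' \<xi> - p' s) \<le> \<epsilon>"
  shows "norm (difference_quotient p p' (s, t) - p' s) \<le> \<epsilon>"
proof -
  have "norm (p t - p s - (t - s) *\<^sub>R p' s) \<le> norm (t - s) * \<epsilon>"
    by (rule vector_differentiable_bound_linearization[where S="{s..t}"])
       (use assms in \<open>auto simp: closed_segment_eq_real_ivl\<close>)
  moreover have "difference_quotient p p' (s, t) - p' s = inverse (t - s) *\<^sub>R (p t - p s - (t - s) *\<^sub>R p' s)"
    using assms(1) by (simp add: difference_quotient_def scaleR_diff_right)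
  ultimately show ?thesis
    using assms(1) by (simp add: inverse_eq_divide pos_divide_le_eq mult.commute)
qed

lemma continuous_at_difference_quotient_off_diagonal:
  fixes p :: "real \<Rightarrow> 'a::real_normed_vector"
  assumes cont: "continuous_on {a..b} p" and "(s, t) \<in> ordered_pairs a b" and "s < t"
  shows "continuous (at (s, t) within ordered_pairs a b) (difference_quotient p p')"
proof -
  define U where "U = {z::real \<times> real. fst z < snd z}"
  have "open U"
    unfolding U_def by (intro open_Collect_less continuous_intros)
  have "(s, t) \<in> U" using \<open>s < t\<close> by (simp add: U_def)
  have "continuous_on (ordered_pairs a b \<inter> U) (\<lambda>z. p (fst z))"
    "continuous_on (ordered_pairs a b \<inter> U) (\<lambda>z. p (snd z))"
    using cont by (auto intro!: continuous_on_compose2[of "{a..b}" p] continuous_intros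
        simp: ordered_pairs_def)
  then have "continuous_on (ordered_pairs a b \<inter> U)
      (\<lambda>z. inverse (snd z - fst z) *\<^sub>R (p (snd z) - p (fst z)))"
    by (intro continuous_intros) (auto simp: U_def)
  then have "continuous_on (ordered_pairs a b \<inter> U) (difference_quotient p p')"
    by (rule continuous_on_eq) (auto simp: U_def difference_quotient_def)
  then have "continuous (at (s, t) within ordered_pairs a b \<inter> U) (difference_quotient p p')"
    using \<open>(s, t) \<in> U\<close> assms(2) by (simp add: continuous_on_eq_continuous_within)
  moreover have "at (s, t) within ordered_pairs a b \<inter> U = at (s, t) within ordered_pairs a b"
    using \<open>open U\<close> \<open>(s, t) \<in> U\<close> by (intro at_within_nhd[of _ U]) auto
  ultimately show ?thesis
    by (simp add: continuous_within)
qed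

lemma continuous_at_difference_quotient_diagonal:
  fixes p :: "real \<Rightarrow> 'a::real_normed_vector"
  assumes deriv: "\<And>s. s \<in> {a..b} \<Longrightarrow> (p has_vector_derivative p' s) (at s within {a..b})"
    and cont: "continuous_on {a..b} p'" and "s0 \<in> {a..b}"
  shows "continuous (at (s0, s0) within ordered_pairs a b) (difference_quotient p p')"
  unfolding continuous_within_eps_delta
proof (intro allI impI)
  fix e :: real assume "0 < e"
  obtain d where "0 < d"
    and d: "\<And>\<xi>. \<xi> \<in> {a..b} \<Longrightarrow> dist \<xi> s0 < d \<Longrightarrow> dist (p' \<xi>) (p' s0) < e/3"
    using cont \<open>s0 \<in> {a..b}\<close> \<open>0 < e\<close> unfolding continuous_on_iff
    by (metis divide_pos_pos zero_less_numeral)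
  have "dist (difference_quotient p p' (s, t)) (p' s0) < e"
    if st: "(s, t) \<in> ordered_pairs a b" "dist (s, t) (s0, s0) < d" for s t
  proof -
    have near: "\<xi> \<in> {a..b}" "dist \<xi> s0 < d" if "\<xi> \<in> {s..t}" for \<xi>
      using that st dist_fst_le[of "(s, t)" "(s0, s0)"] dist_snd_le[of "(s, t)" "(s0, s0)"]
      by (auto simp: ordered_pairs_def dist_real_def)
    have "s \<in> {s..t}" using st by (auto simp: ordered_pairs_def)
    have "norm (difference_quotient p p' (s, t) - p' s) \<le> 2/3 * e"
    proof (cases "s = t")
      case False
      show ?thesis
      proof (rule difference_quotient_approx_derivative)
        show "s < t" using st False by (auto simp: ordered_pairs_def)
        show "(p has_vector_derivative p' \<xi>) (at \<xi> within {s..t})" if "\<xi> \<in> {s..t}" for \<xi>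
          by (rule has_vector_derivative_within_subset[OF deriv[OF near(1)[OF that]]])
             (use near(1) in blast)
        show "norm (p' \<xi> - p' s) \<le> 2/3 * e" if "\<xi> \<in> {s..t}" for \<xi>
          using d[OF near[OF that]] d[OF near[OF \<open>s \<in> {s..t}\<close>]]
            norm_triangle_lt[of "p' \<xi> - p' s0" "p' s0 - p' s" "2/3 * e"]
          by (auto simp: dist_norm norm_minus_commute)
      qed
    qed (use \<open>0 < e\<close> in \<open>simp add: difference_quotient_def\<close>)
    moreover have "norm (p' s - p' s0) < e/3"
      using d[OF near[OF \<open>s \<in> {s..t}\<close>]] by (simp add: dist_norm)
    ultimately show ?thesis
      using norm_triangle_ineq[of "difference_quotient p p' (s, t) - p' s" "p' s - p' s0"]
      by (simp add: dist_norm)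
  qed
  then show "\<exists>d>0. \<forall>z\<in>ordered_pairs a b. dist z (s0, s0) < d \<longrightarrow>
      dist (difference_quotient p p' z) (difference_quotient p p' (s0, s0)) < e"
    using \<open>0 < d\<close> by (auto simp: difference_quotient_def)
qed

lemma continuous_on_difference_quotient:
  fixes p :: "real \<Rightarrow> 'a::real_normed_vector"
  assumes deriv: "\<And>s. s \<in> {a..b} \<Longrightarrow> (p has_vector_derivative p' s) (at s within {a..b})"
    and cont: "continuous_on {a..b} p'"
  shows "continuous_on (ordered_pairs a b) (difference_quotient p p')"
  unfolding continuous_on_eq_continuous_within
proof
  fix z assume z: "z \<in> ordered_pairs a b"
  obtain s t where z_eq: "z = (s, t)" by fastforce
  have "continuous_on {a..b} p"
    using deriv continuous_on_eq_continuous_within has_vector_derivative_continuous by blast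
  then show "continuous (at z within ordered_pairs a b) (difference_quotient p p')"
    using z continuous_at_difference_quotient_off_diagonal[of a b p s t p']
      continuous_at_difference_quotient_diagonal[OF deriv cont, of s]
    by (cases "s = t") (auto simp: z_eq ordered_pairs_def)
qed

lemma difference_quotient_nonzero:
  assumes "inj_on p {a..b}" "\<And>s. s \<in> {a..b} \<Longrightarrow> p' s \<noteq> 0" "z \<in> ordered_pairs a b"
  shows "difference_quotient p p' z \<noteq> 0"
  using assms by (cases z) (auto simp: difference_quotient_def ordered_pairs_def inj_on_def)

lemma continuous_argument_on_contractible:
  fixes F :: "'a::real_normed_vector \<Rightarrow> complex"
  assumes "continuous_on S F" "contractible S" "\<And>z. z \<in> S \<Longrightarrow> F z \<noteq> 0"
    and "z0 \<in> S" "Im (F z0) = 0" "0 < Re (F z0)"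
  obtains \<theta> where "continuous_on S \<theta>" "\<theta> z0 = 0"
    "\<And>z. z \<in> S \<Longrightarrow> F z = of_real (norm (F z)) * cis (\<theta> z)"
proof -
  obtain g where "continuous_on S g" and g: "\<And>z. z \<in> S \<Longrightarrow> F z = exp (g z)"
    using continuous_logarithm_on_contractible[OF assms(1-3)] by blast
  define \<theta> where "\<theta> z = Im (g z - g z0)" for z
  have "continuous_on S \<theta>"
    unfolding \<theta>_def by (intro continuous_intros \<open>continuous_on S g\<close>)
  moreover have "\<theta> z0 = 0"
    by (simp add: \<theta>_def)
  moreover have "F z = of_real (norm (F z)) * cis (\<theta> z)" if "z \<in> S" for z
  proof -
    have "F z = F z0 * exp (g z - g z0)"
      using g[OF that] g[OF \<open>z0 \<in> S\<close>] by (simp add: exp_diff)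
    also have "\<dots> = of_real (Re (F z0) * exp (Re (g z - g z0))) * cis (\<theta> z)"
      using assms(5) by (simp add: \<theta>_def exp_eq_polar complex_eq_iff)
    finally have polar: "F z = of_real (Re (F z0) * exp (Re (g z - g z0))) * cis (\<theta> z)" .
    then have "norm (F z) = Re (F z0) * exp (Re (g z - g z0))"
      using assms(6) by (simp add: norm_mult)
    with polar show ?thesis
      by simp
  qed
  ultimately show thesis
    by (rule that)
qed

lemma positive_real_value_on_diagonal:
  fixes F :: "real \<times> real \<Rightarrow> complex"
  assumes "a \<le> b"
    and cont: "continuous_on (ordered_pairs a b) F"
    and nonzero: "\<And>z. z \<in> ordered_pairs a b \<Longrightarrow> F z \<noteq> 0"
    and chord: "Im (F (a, b)) = 0" "0 < Re (F (a, b))"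
    and left_edge: "\<And>t. t \<in> {a..b} \<Longrightarrow> 0 \<le> Im (F (a, t))"
    and top_edge: "\<And>t. t \<in> {a..b} \<Longrightarrow> Im (F (t, b)) \<le> 0"
  shows "\<exists>s\<in>{a..b}. Im (F (s, s)) = 0 \<and> 0 < Re (F (s, s))"
proof -
  let ?T = "ordered_pairs a b"
  have ab: "(a, b) \<in> ?T" using \<open>a \<le> b\<close> by (simp add: ordered_pairs_def)
  obtain \<theta> where "continuous_on ?T \<theta>" "\<theta> (a, b) = 0"
    and polar: "\<And>z. z \<in> ?T \<Longrightarrow> F z = of_real (norm (F z)) * cis (\<theta> z)"
    using continuous_argument_on_contractible[OF cont _ nonzero ab chord]
      convex_imp_contractible[OF convex_ordered_pairs] by blast
  have Im_F: "Im (F z) = norm (F z) * sin (\<theta> z)" and norm_pos: "0 < norm (F z)" if "z \<in> ?T" for z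
    using arg_cong[OF polar[OF that], of Im] nonzero[OF that] by simp_all
  then have Im_F_nonneg_iff: "0 \<le> Im (F z) \<longleftrightarrow> 0 \<le> sin (\<theta> z)"
    and Im_F_nonpos_iff: "Im (F z) \<le> 0 \<longleftrightarrow> sin (\<theta> z) \<le> 0" if "z \<in> ?T" for z
    using that by (simp_all add: zero_le_mult_iff mult_le_0_iff)
  have cont_path: "continuous_on {a..b} (\<lambda>t. \<theta> (\<gamma> t))"
    if "continuous_on {a..b} \<gamma>" "\<gamma> ` {a..b} \<subseteq> ?T" for \<gamma>
    using continuous_on_compose2 \<open>continuous_on ?T \<theta>\<close> that by blast
  have cont_edges: "continuous_on {a..b} (\<lambda>t. \<theta> (a, t))"
      "continuous_on {a..b} (\<lambda>t. - \<theta> (t, b))"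
    and cont_diagonal: "continuous_on {a..b} (\<lambda>t. \<theta> (t, t))"
    by (intro continuous_on_minus cont_path continuous_intros; force simp: ordered_pairs_def)+
  have "0 \<le> sin (\<theta> (a, t))" if "t \<in> {a..b}" for t
    using left_edge[OF that] Im_F_nonneg_iff[of "(a, t)"] that by (simp add: ordered_pairs_def)
  then have "0 \<le> \<theta> (a, a)"
    using continuous_sin_nonneg_imp_range_0_pi[OF _ cont_edges(1), of b a]
      \<open>a \<le> b\<close> \<open>\<theta> (a, b) = 0\<close>
    by simp
  moreover have "0 \<le> sin (- \<theta> (t, b))" if "t \<in> {a..b}" for t
    using top_edge[OF that] Im_F_nonpos_iff[of "(t, b)"] that by (simp add: ordered_pairs_def)
  then have "\<theta> (b, b) \<le> 0"
    using continuous_sin_nonneg_imp_range_0_pi[OF _ cont_edges(2), of a b]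
      \<open>a \<le> b\<close> \<open>\<theta> (a, b) = 0\<close>
    by simp
  ultimately obtain s where s: "s \<in> {a..b}" "\<theta> (s, s) = 0"
    using IVT2'[of "\<lambda>t. \<theta> (t, t)" b 0 a] cont_diagonal \<open>a \<le> b\<close> by auto
  moreover from s have "(s, s) \<in> ?T"
    by (simp add: ordered_pairs_def)
  ultimately show ?thesis
    using Im_F[of "(s, s)"] norm_pos[of "(s, s)"] arg_cong[OF polar[of "(s, s)"], of Re] by auto
qed

lemma positive_tangent_of_arc_in_upper_half_plane:
  fixes p p' :: "real \<Rightarrow> complex"
  assumes "a < b"
    and deriv: "\<And>s. s \<in> {a..b} \<Longrightarrow> (p has_vector_derivative p' s) (at s within {a..b})"
    and "continuous_on {a..b} p'"
    and "\<And>s. s \<in> {a..b} \<Longrightarrow> p' s \<noteq> 0"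
    and "inj_on p {a..b}"
    and ends: "Im (p a) = 0" "Im (p b) = 0" "Re (p a) < Re (p b)"
    and upper: "\<And>s. s \<in> {a..b} \<Longrightarrow> 0 \<le> Im (p s)"
  shows "\<exists>s\<in>{a..b}. Im (p' s) = 0 \<and> 0 < Re (p' s)"
proof -
  let ?F = "difference_quotient p p'"
  have cont: "continuous_on (ordered_pairs a b) ?F"
    using deriv assms(3) by (rule continuous_on_difference_quotient)
  have cont_edge: "continuous_on {a..b} (\<lambda>t. Im (?F (\<gamma> t)))"
    if "continuous_on {a..b} \<gamma>" "\<gamma> ` {a..b} \<subseteq> ordered_pairs a b" for \<gamma>
    using continuous_on_compose2[OF cont that] by (rule continuous_on_Im)
  have "0 \<le> Im (?F (a, t))" if "t \<in> {a..b}" for t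
  proof (rule continuous_ge_on_closure[of "{a<..b}" "\<lambda>t. Im (?F (a, t))"])
    show "continuous_on (closure {a<..b}) (\<lambda>t. Im (?F (a, t)))"
      using \<open>a < b\<close>
      by (simp only: closure_greaterThanAtMost closure_atLeastLessThan)
         (intro cont_edge continuous_intros; force simp: ordered_pairs_def)
    show "0 \<le> Im (?F (a, t))" if "t \<in> {a<..b}" for t
      using that upper[of t] ends(1) by (simp add: difference_quotient_def)
  qed (use that \<open>a < b\<close> in auto)
  moreover have "Im (?F (t, b)) \<le> 0" if "t \<in> {a..b}" for t
  proof (rule continuous_le_on_closure[of "{a..<b}" "\<lambda>t. Im (?F (t, b))"])
    show "continuous_on (closure {a..<b}) (\<lambda>t. Im (?F (t, b)))"
      using \<open>a < b\<close>
      by (simp only: closure_greaterThanAtMost closure_atLeastLessThan)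
         (intro cont_edge continuous_intros; force simp: ordered_pairs_def)
    show "Im (?F (t, b)) \<le> 0" if "t \<in> {a..<b}" for t
      using that upper[of t] ends(2) by (simp add: difference_quotient_def)
  qed (use that \<open>a < b\<close> in auto)
  moreover have "Im (?F (a, b)) = 0" "0 < Re (?F (a, b))"
    using ends \<open>a < b\<close> by (simp_all add: difference_quotient_def)
  moreover have "?F z \<noteq> 0" if "z \<in> ordered_pairs a b" for z
    using assms(5,4) that by (rule difference_quotient_nonzero)
  ultimately obtain s where "s \<in> {a..b}" "Im (?F (s, s)) = 0" "0 < Re (?F (s, s))"
    using positive_real_value_on_diagonal[OF less_imp_le[OF \<open>a < b\<close>] cont] by blast
  then show ?thesis
    by (auto simp: difference_quotient_def)
qed

lemma leaves_real_axis_or_moves_left: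
  fixes p :: "real \<Rightarrow> complex"
  assumes "(p has_vector_derivative v) (at u within S)"
    and "Im (p u) = 0" and "Im v \<noteq> 0 \<or> Re v < 0"
  shows "\<exists>d>0. \<forall>s\<in>S. u < s \<and> s < u + d \<longrightarrow> Im (p s) \<noteq> 0 \<or> Re (p s) < Re (p u)"
proof -
  define m where "m = max \<bar>Im v\<bar> (- Re v)"
  have "0 < m" using assms(3) by (auto simp: m_def)
  moreover have "\<forall>e>0. \<exists>d>0. \<forall>s\<in>S. norm (s - u) < d \<longrightarrow>
      norm (p s - p u - (s - u) *\<^sub>R v) \<le> e * norm (s - u)"
    using assms(1) by (simp add: has_vector_derivative_def has_derivative_within_alt)
  ultimately obtain d where "0 < d" and d: "\<And>s. s \<in> S \<Longrightarrow> norm (s - u) < d \<Longrightarrow>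
      norm (p s - p u - (s - u) *\<^sub>R v) \<le> m/2 * norm (s - u)"
    by (metis half_gt_zero)
  have "Im (p s) \<noteq> 0 \<or> Re (p s) < Re (p u)" if "s \<in> S" "u < s" "s < u + d" for s
  proof (rule ccontr)
    let ?err = "p s - p u - (s - u) *\<^sub>R v"
    assume "\<not> ?thesis"
    then have "Im ?err = (u - s) * Im v" "(s - u) * (- Re v) \<le> Re ?err"
      using assms(2) by (simp_all add: algebra_simps)
    moreover have "\<bar>Im ?err\<bar> \<le> m/2 * (s - u)" "Re ?err \<le> m/2 * (s - u)"
      using d[of s] that abs_Im_le_cmod[of ?err] complex_Re_le_cmod[of ?err] by auto
    ultimately have "(s - u) * \<bar>Im v\<bar> \<le> (s - u) * (m/2)" "(s - u) * (- Re v) \<le> (s - u) * (m/2)"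
      using that(2) by (simp_all add: abs_mult abs_minus_commute mult.commute)
    moreover have "m = \<bar>Im v\<bar> \<or> m = - Re v"
      by (simp add: m_def max_def)
    ultimately have "(s - u) * m \<le> (s - u) * (m/2)"
      by auto
    then show False
      using \<open>0 < m\<close> that(2) by simp
  qed
  then show ?thesis
    using \<open>0 < d\<close> by blast
qed

lemma continuous_nonvanishing_inside_imp_constant_sign:
  fixes f :: "real \<Rightarrow> real"
  assumes "continuous_on {a..b} f" and "\<And>s. a < s \<Longrightarrow> s < b \<Longrightarrow> f s \<noteq> 0"
  shows "(\<forall>s\<in>{a..b}. 0 \<le> f s) \<or> (\<forall>s\<in>{a..b}. f s \<le> 0)"
proof (rule ccontr)
  assume "\<not> ?thesis"
  then obtain s1 s2 where s1: "s1 \<in> {a..b}" "f s1 < 0" and s2: "s2 \<in> {a..b}" "0 < f s2"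
    by force
  define lo hi where "lo = min s1 s2" and "hi = max s1 s2"
  have "{lo..hi} \<subseteq> {a..b}" "s1 \<in> {lo..hi}" "s2 \<in> {lo..hi}"
    using s1(1) s2(1) by (auto simp: lo_def hi_def)
  then have "connected (f ` {lo..hi})"
    by (intro connected_continuous_image continuous_on_subset[OF assms(1)]) auto
  then have "0 \<in> f ` {lo..hi}"
    using imageI[of _ _ f, OF \<open>s1 \<in> {lo..hi}\<close>] imageI[of _ _ f, OF \<open>s2 \<in> {lo..hi}\<close>]
      less_imp_le[OF s1(2)] less_imp_le[OF s2(2)]
    by (rule connectedD_interval)
  then obtain x where x: "x \<in> {lo..hi}" "f x = 0" by (metis imageE)
  have "lo \<in> {s1, s2}" "hi \<in> {s1, s2}"
    by (simp_all add: lo_def hi_def min_def max_def)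
  then have "x \<noteq> lo" "x \<noteq> hi"
    using x(2) s1(2) s2(2) by auto
  then have "lo < x" "x < hi"
    using x(1) by (simp_all add: order_less_le)
  moreover have "a \<le> lo" "hi \<le> b"
    using s1(1) s2(1) by (auto simp: lo_def hi_def)
  ultimately show False
    using assms(2)[of x] x(2) by linarith
qed

lemma first_zero_after:
  fixes f :: "real \<Rightarrow> real"
  assumes cont: "continuous_on {u..b} f" and "u < b" "f b = 0"
    and "0 < d" and near: "\<And>s. u < s \<Longrightarrow> s < u + d \<Longrightarrow> s \<le> b \<Longrightarrow> f s \<noteq> 0"
  obtains v where "u < v" "v \<le> b" "f v = 0" "\<And>s. u < s \<Longrightarrow> s < v \<Longrightarrow> f s \<noteq> 0"
proof -
  define e where "e = min (d/2) (b - u)"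
  have e: "0 < e" "e < d" "u + e \<le> b"
    using \<open>0 < d\<close> \<open>u < b\<close> by (auto simp: e_def)
  define V where "V = {s \<in> {u + e..b}. f s = 0}"
  have "V = {u + e..b} \<inter> f -` {0}"
    by (auto simp: V_def)
  also have "closed \<dots>"
    using e by (intro continuous_closed_preimage continuous_on_subset[OF cont]) auto
  finally have "closed V" .
  define v where "v = Inf V"
  have "b \<in> V" "bdd_below V"
    using e \<open>f b = 0\<close> by (auto simp: V_def intro: bdd_belowI[of _ "u + e"])
  then have "v \<in> V" and v_min: "\<And>s. s \<in> V \<Longrightarrow> v \<le> s"
    using closed_contains_Inf[OF _ _ \<open>closed V\<close>] cInf_lower by (auto simp: v_def)
  then have v: "u + e \<le> v" "v \<le> b" "f v = 0"
    by (auto simp: V_def)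
  show thesis
  proof
    show "u < v" "v \<le> b" "f v = 0"
      using v e by auto
    show "f s \<noteq> 0" if "u < s" "s < v" for s
    proof (cases "s < u + d")
      case True
      then show ?thesis using near that v by auto
    next
      case False
      then show ?thesis using v_min[of s] that v e by (auto simp: V_def)
    qed
  qed
qed

lemma real_axis_excursion:
  fixes p p' :: "real \<Rightarrow> complex"
  assumes deriv: "\<And>s. s \<in> {a..b} \<Longrightarrow> (p has_vector_derivative p' s) (at s within {a..b})"
    and nonzero: "\<And>s. s \<in> {a..b} \<Longrightarrow> p' s \<noteq> 0"
    and not_positive: "\<And>s. s \<in> {a..b} \<Longrightarrow> \<not> (Im (p' s) = 0 \<and> 0 < Re (p' s))"
    and start: "a \<le> b" "Im (p a) = 0" "Re (p a) \<le> 0"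
    and finish: "Im (p b) = 0" "0 < Re (p b)"
  obtains u v where "a \<le> u" "u < v" "v \<le> b" "Im (p u) = 0" "Im (p v) = 0"
    "Re (p u) < Re (p v)" "\<And>s. u < s \<Longrightarrow> s < v \<Longrightarrow> Im (p s) \<noteq> 0"
proof -
  have cont: "continuous_on {a..b} p"
    using deriv continuous_on_eq_continuous_within has_vector_derivative_continuous by blast
  define U where "U = {s \<in> {a..b}. Im (p s) = 0 \<and> Re (p s) \<le> 0}"
  have "U = {a..b} \<inter> (\<lambda>s. (Im (p s), Re (p s))) -` ({0} \<times> {..0})"
    by (auto simp: U_def)
  also have "closed \<dots>"
    by (intro continuous_closed_preimage continuous_intros cont closed_Times closed_atMost
        closed_singleton)
  finally have "closed U" .
  define u where "u = Sup U"
  have "a \<in> U" "bdd_above U"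
    using start by (auto simp: U_def intro: bdd_aboveI[of _ b])
  then have "u \<in> U" and u_max: "\<And>s. s \<in> U \<Longrightarrow> s \<le> u"
    using closed_contains_Sup[OF _ _ \<open>closed U\<close>] cSup_upper by (auto simp: u_def)
  then have u: "u \<in> {a..b}" "Im (p u) = 0" "Re (p u) \<le> 0"
    by (auto simp: U_def)
  with finish have "u < b" by (cases "u = b") auto
  have "Im (p' u) \<noteq> 0 \<or> Re (p' u) < 0"
    using nonzero[OF u(1)] not_positive[OF u(1)] by (auto simp: complex_eq_iff)
  then obtain d where "0 < d" and d: "\<And>s. s \<in> {a..b} \<Longrightarrow> u < s \<Longrightarrow> s < u + d \<Longrightarrow>
      Im (p s) \<noteq> 0 \<or> Re (p s) < Re (p u)"
    using leaves_real_axis_or_moves_left[OF deriv[OF u(1)] u(2)] by blast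
  have "Im (p s) \<noteq> 0" if "u < s" "s < u + d" "s \<le> b" for s
    using d[of s] u_max[of s] that u by (force simp: U_def)
  moreover have "continuous_on {u..b} (\<lambda>s. Im (p s))"
    using u(1) by (intro continuous_intros continuous_on_subset[OF cont]) auto
  ultimately obtain v where v: "u < v" "v \<le> b" "Im (p v) = 0"
    and between: "\<And>s. u < s \<Longrightarrow> s < v \<Longrightarrow> Im (p s) \<noteq> 0"
    using first_zero_after[of u b "\<lambda>s. Im (p s)" d] \<open>u < b\<close> finish(1) \<open>0 < d\<close> by blast
  have "v \<notin> U"
    using u_max[of v] v by auto
  then have "Re (p u) < Re (p v)"
    using u v by (auto simp: U_def)
  with u v between show thesis
    by (intro that) auto
qed

lemma positive_tangent_of_arc_crossing_positive_axis:
  fixes p p' :: "real \<Rightarrow> complex"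
  assumes deriv: "\<And>s. s \<in> {a..b} \<Longrightarrow> (p has_vector_derivative p' s) (at s within {a..b})"
    and cont: "continuous_on {a..b} p'"
    and nonzero: "\<And>s. s \<in> {a..b} \<Longrightarrow> p' s \<noteq> 0"
    and inj: "inj_on p {a..b}"
    and start: "a \<le> b" "Im (p a) = 0" "Re (p a) \<le> 0"
    and finish: "Im (p b) = 0" "0 < Re (p b)"
  shows "\<exists>s\<in>{a..b}. Im (p' s) = 0 \<and> 0 < Re (p' s)"
proof (rule ccontr)
  assume no_tangent: "\<not> ?thesis"
  then obtain u v where uv: "a \<le> u" "u < v" "v \<le> b" "Im (p u) = 0" "Im (p v) = 0"
    "Re (p u) < Re (p v)" and off_axis: "\<And>s. u < s \<Longrightarrow> s < v \<Longrightarrow> Im (p s) \<noteq> 0"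
    using real_axis_excursion[OF deriv nonzero _ start finish] by blast
  have sub: "{u..v} \<subseteq> {a..b}"
    using uv by auto
  have deriv_uv: "\<And>s. s \<in> {u..v} \<Longrightarrow> (p has_vector_derivative p' s) (at s within {u..v})"
    using deriv sub by (meson has_vector_derivative_within_subset subsetD)
  have cont_uv: "continuous_on {u..v} p'"
    using cont sub by (rule continuous_on_subset)
  have "continuous_on {u..v} (\<lambda>s. Im (p s))"
    using deriv_uv continuous_on_eq_continuous_within has_vector_derivative_continuous
      continuous_on_Im by blast
  then consider "\<And>s. s \<in> {u..v} \<Longrightarrow> 0 \<le> Im (p s)" | "\<And>s. s \<in> {u..v} \<Longrightarrow> Im (p s) \<le> 0"
    using continuous_nonvanishing_inside_imp_constant_sign off_axis by blast
  then show False
  proof cases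
    case 1
    then have "\<exists>s\<in>{u..v}. Im (p' s) = 0 \<and> 0 < Re (p' s)"
      using uv sub nonzero inj_on_subset[OF inj sub]
      by (intro positive_tangent_of_arc_in_upper_half_plane[OF _ deriv_uv cont_uv]) auto
    with no_tangent sub show False by blast
  next
    case 2
    have "\<exists>s\<in>{u..v}. Im (cnj (p' s)) = 0 \<and> 0 < Re (cnj (p' s))"
    proof (rule positive_tangent_of_arc_in_upper_half_plane)
      show "((\<lambda>s. cnj (p s)) has_vector_derivative cnj (p' s)) (at s within {u..v})"
        if "s \<in> {u..v}" for s
        using deriv_uv[OF that] by (rule has_vector_derivative_cnj)
      show "inj_on (\<lambda>s. cnj (p s)) {u..v}"
        using inj_on_subset[OF inj sub] by (auto simp: inj_on_def)
    qed (use uv sub nonzero 2 cont_uv in \<open>auto intro: continuous_intros\<close>)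
    with no_tangent sub show False by auto
  qed
qed

lemma smooth_curve_onE:
  assumes "smooth_curve_on a b r"
  obtains r' where "\<And>s. s \<in> {a..b} \<Longrightarrow> (r has_vector_derivative r' s) (at s within {a..b})"
    and "continuous_on {a..b} r'"
proof -
  obtain D where D0: "D 0 = r"
    and D: "\<forall>n. \<forall>s\<in>{a..b}. (D n has_vector_derivative D (Suc n) s) (at s within {a..b})"
    using assms unfolding smooth_curve_on_def by blast
  have "(r has_vector_derivative D 1 s) (at s within {a..b})" if "s \<in> {a..b}" for s
    using D that D0 by (metis One_nat_def)
  moreover have "continuous_on {a..b} (D 1)"
    unfolding continuous_on_eq_continuous_within using D has_vector_derivative_continuous by blast
  ultimately show thesis
    by (rule that)
qed

lemma norm_vec2: "norm (v :: real^2) = sqrt ((v $ 1)\<^sup>2 + (v $ 2)\<^sup>2)"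
  by (simp add: norm_vec_def L2_set_def UNIV_2)

definition complex_of_vec2 :: "real^2 \<Rightarrow> complex" where
  "complex_of_vec2 v = Complex (v $ 1) (v $ 2)"

lemma Re_complex_of_vec2 [simp]: "Re (complex_of_vec2 v) = v $ 1"
  and Im_complex_of_vec2 [simp]: "Im (complex_of_vec2 v) = v $ 2"
  by (simp_all add: complex_of_vec2_def)

lemma norm_complex_of_vec2 [simp]: "norm (complex_of_vec2 v) = norm v"
  by (simp add: cmod_def norm_vec2)

lemma complex_of_vec2_eq_iff [simp]: "complex_of_vec2 v = complex_of_vec2 w \<longleftrightarrow> v = w"
  by (simp add: complex_eq_iff vec_eq_iff forall_2)

lemma complex_of_vec2_eq_0_iff [simp]: "complex_of_vec2 v = 0 \<longleftrightarrow> v = 0"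
  by (simp add: complex_eq_iff vec_eq_iff forall_2)

lemma bounded_linear_complex_of_vec2: "bounded_linear complex_of_vec2"
proof (rule bounded_linear_intro[where K=1])
  show "norm (complex_of_vec2 v) \<le> norm v * 1" for v
    by simp
qed (simp_all add: complex_eq_iff)

lemma positive_horizontal_tangent_of_injective_arc:
  fixes r r' :: "real \<Rightarrow> real^2"
  assumes deriv: "\<And>s. s \<in> {a..b} \<Longrightarrow> (r has_vector_derivative r' s) (at s within {a..b})"
    and "continuous_on {a..b} r'"
    and nonzero: "\<And>s. s \<in> {a..b} \<Longrightarrow> r' s \<noteq> 0"
    and "inj_on r {a..b}"
    and ends: "a \<le> b" "r a $ 2 = 0" "r a $ 1 \<le> 0" "r b $ 2 = 0" "0 < r b $ 1"
  shows "\<exists>s\<in>{a..b}. r' s $ 2 = 0 \<and> 0 < r' s $ 1"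
proof -
  let ?p = "complex_of_vec2 \<circ> r" and ?p' = "complex_of_vec2 \<circ> r'"
  have "\<exists>s\<in>{a..b}. Im (?p' s) = 0 \<and> 0 < Re (?p' s)"
  proof (rule positive_tangent_of_arc_crossing_positive_axis)
    show "(?p has_vector_derivative ?p' s) (at s within {a..b})" if "s \<in> {a..b}" for s
      using bounded_linear.has_vector_derivative[OF bounded_linear_complex_of_vec2 deriv[OF that]]
      by (simp add: o_def)
    show "continuous_on {a..b} ?p'"
      using \<open>continuous_on {a..b} r'\<close> linear_continuous_on[OF bounded_linear_complex_of_vec2]
      by (rule continuous_on_compose)
    show "?p' s \<noteq> 0" if "s \<in> {a..b}" for s
      using nonzero[OF that] by simp
    show "inj_on ?p {a..b}"
      using \<open>inj_on r {a..b}\<close> by (rule comp_inj_on) (simp add: inj_on_def)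
  qed (use ends in simp_all)
  then show ?thesis
    by simp
qed

theorem lemma1:
  fixes L :: real and r :: "real \<Rightarrow> real^2"
  assumes "L > 1"
    and "smooth_curve_on 0 L r"
    and "\<forall>s\<in>{0..L}. norm (vector_derivative r (at s within {0..L})) = 1"
    and "r 0 = vector [0, 0]"
    and "r L = vector [1, 0]"
    and "\<not> (\<exists>s\<in>{0..L}. vector_derivative r (at s within {0..L}) = vector [1, 0])"
  shows "\<exists>s1\<in>{0..L}. \<exists>s2\<in>{0..L}. s1 \<noteq> s2 \<and> r s1 = r s2"
proof (rule ccontr)
  assume "\<not> ?thesis"
  then have "inj_on r {0..L}"
    unfolding inj_on_def by blast
  obtain r' where deriv: "\<And>s. s \<in> {0..L} \<Longrightarrow> (r has_vector_derivative r' s) (at s within {0..L})"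
    and "continuous_on {0..L} r'"
    using smooth_curve_onE[OF assms(2)] by blast
  have r': "vector_derivative r (at s within {0..L}) = r' s" if "s \<in> {0..L}" for s
    using vector_derivative_within_cbox[of 0 L s r "r' s"] deriv[OF that] assms(1) that
    by (simp add: cbox_interval)
  have unit: "norm (r' s) = 1" if "s \<in> {0..L}" for s
    using bspec[OF assms(3) that] unfolding r'[OF that] .
  obtain s where s: "s \<in> {0..L}" "r' s $ 2 = 0" "0 < r' s $ 1"
    using positive_horizontal_tangent_of_injective_arc[OF deriv \<open>continuous_on {0..L} r'\<close> _
        \<open>inj_on r {0..L}\<close>] unit assms(1,4,5) by fastforce
  then have "r' s = vector [1, 0]"
    using unit[OF s(1)] by (simp add: norm_vec2 vec_eq_iff forall_2)
  with assms(6) r' s(1) show False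
    by auto
qed

end
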